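(* Consider a length-$l$ segment embedded in a gapped translation-invariant 1D free-fermion lattice system with $L$ unit cells, $1\le l<L\le\infty$, under periodic boundary conditions, and denote by $P^{(L)}_<$ the single-particle projector onto the Fermi sea. Assume that there are constants $C>0$ and $\kappa>0$ independent of $j,j'$ such that $$\|\langle j|P^{(\infty)}_<|j'\rangle\|\le Ce^{-\kappa|j-j'|}\quad\forall j,j'\in\mathbb{Z}.$$ Then $$\|P_SP^{(L)}_<P_S-P_SP^{(\infty)}_<P_S\|\le\frac{2C\sinh(\kappa l)}{(e^{\kappa L}-1)\sinh\kappa},$$ where $P_S=\sum_{j=1}^l|j\rangle\langle j|\otimes\mathbb{1}_{\rm I}$ is the projector onto the segment.
   Context: The system has $d$ internal states per unit cell, $\mathbb{1}_{\rm I}$ is the identity on $\mathbb{C}^d$, $\|\cdot\|$ the operator norm, and $\langle j|P|j'\rangle$ the $d\times d$ block between unit cells $j,j'$. Both $P^{(L)}_<$ and $P^{(\infty)}_<$ come from the same Bloch projector $P_<(k)$ onto the occupied bands: $\langle j|P^{(\infty)}_<|j'\rangle=\int_{-\pi}^{\pi}\frac{dk}{2\pi}e^{ik(j-j')}P_<(k)$ and $\langle j|P^{(L)}_<|j'\rangle=\frac1L\sum_{k\in\frac{2\pi}{L}\{1,\dots,L\}}e^{ik(j-j')}P_<(k)$; the segment consists of unit cells $1,\dots,l$, viewed inside both the finite and the infinite lattice. *)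

theory Defs
  imports "HOL-Analysis.Analysis"
begin

definition mat_opnorm :: "'i set \<Rightarrow> ('i \<Rightarrow> 'i \<Rightarrow> complex) \<Rightarrow> real" where
  "mat_opnorm I M =
     (SUP v \<in> {v :: 'i \<Rightarrow> complex. (\<Sum>i\<in>I. (cmod (v i))^2) \<le> 1}.
        sqrt (\<Sum>i\<in>I. (cmod (\<Sum>j\<in>I. M i j * v j))^2))"

text \<open>d x d block between unit cells j, j' of the infinite-lattice Fermi-sea projector,
  built from the Bloch projector Pk (internal states indexed by the finite type 'n).\<close>
definition Pinf_block :: "(real \<Rightarrow> 'n \<Rightarrow> 'n \<Rightarrow> complex) \<Rightarrow> int \<Rightarrow> int \<Rightarrow> 'n \<Rightarrow> 'n \<Rightarrow> complex" where
  "Pinf_block Pk j j' a b =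
     integral {-pi..pi} (\<lambda>k. exp (\<i> * of_real (k * of_int (j - j'))) * Pk k a b)
       / complex_of_real (2 * pi)"

text \<open>Same block for the periodic lattice of L unit cells.\<close>
definition PL_block :: "(real \<Rightarrow> 'n \<Rightarrow> 'n \<Rightarrow> complex) \<Rightarrow> nat \<Rightarrow> int \<Rightarrow> int \<Rightarrow> 'n \<Rightarrow> 'n \<Rightarrow> complex" where
  "PL_block Pk L j j' a b =
     (\<Sum>m\<in>{1..L}. let k = 2 * pi * real m / real L in
        exp (\<i> * of_real (k * of_int (j - j'))) * Pk k a b) / of_nat L"

end

theory Submission
  imports Defs
begin

(* Write D(r) for the block of P_L - P_inf at distance r = j - j'. Sampling the Bloch projector at
   the L points 2 pi m / L and inverting its Fourier series, which converges absolutely by the decay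
   hypothesis, gives the aliasing identity D(r) = sum over n ~= 0 of P_inf(r + n L). For |r| < L the
   decay bound sums geometrically to ||D(r)|| <= 2 C cosh (kappa r) / (e^(kappa L) - 1), and the Schur
   test bounds the norm of the block matrix (D(j - j')) over 1 <= j, j' <= l by the largest row sum of
   these bounds, which is at most 2 C sinh (kappa l) / ((e^(kappa L) - 1) sinh kappa).
   Pointwise Fourier inversion rests on the uniqueness theorem for continuous periodic functions,
   proved by approximating them uniformly with trigonometric polynomials (Stone-Weierstrass on the
   circle). *)

section \<open>Trigonometric polynomials and Fourier inversion\<close>

inductive trig_poly :: "(real \<Rightarrow> complex) \<Rightarrow> bool" where
  trig_poly_monomial: "trig_poly (\<lambda>x. c * cis (x * of_int n))"
| trig_poly_add: "trig_poly f \<Longrightarrow> trig_poly g \<Longrightarrow> trig_poly (\<lambda>x. f x + g x)"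

lemma trig_poly_const: "trig_poly (\<lambda>x. c)"
  using trig_poly_monomial[of c 0] by simp

lemma trig_poly_monomial_mult:
  "trig_poly g \<Longrightarrow> trig_poly (\<lambda>x. c * cis (x * of_int n) * g x)"
proof (induction rule: trig_poly.induct)
  case (trig_poly_monomial d m)
  have "(\<lambda>x. c * cis (x * of_int n) * (d * cis (x * of_int m))) =
        (\<lambda>x. (c * d) * cis (x * of_int (n + m)))"
    by (auto simp: cis_mult algebra_simps)
  then show ?case by (metis trig_poly.trig_poly_monomial)
next
  case (trig_poly_add f g)
  have "trig_poly (\<lambda>x. c * cis (x * of_int n) * f x + c * cis (x * of_int n) * g x)"
    by (rule trig_poly.trig_poly_add[OF trig_poly_add.IH])
  then show ?case by (simp only: distrib_left)
qed

lemma trig_poly_mult: "trig_poly f \<Longrightarrow> trig_poly g \<Longrightarrow> trig_poly (\<lambda>x. f x * g x)"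
proof (induction rule: trig_poly.induct)
  case (trig_poly_add f1 f2)
  have "trig_poly (\<lambda>x. f1 x * g x + f2 x * g x)"
    by (rule trig_poly.trig_poly_add[OF trig_poly_add.IH[OF trig_poly_add.prems]])
  then show ?case by (simp only: distrib_right)
qed (rule trig_poly_monomial_mult)

lemma trig_poly_real_polynomial_function:
  fixes f :: "complex \<Rightarrow> real"
  shows "real_polynomial_function f \<Longrightarrow> trig_poly (\<lambda>x. of_real (f (cis x)))"
proof (induction rule: real_polynomial_function.induct)
  case (linear f)
  have "cis x = cos x *\<^sub>R 1 + sin x *\<^sub>R \<i>" for x
    by (simp add: complex_eq_iff)
  then have "f (cis x) = cos x * f 1 + sin x * f \<i>" for x
    using bounded_linear.linear[OF linear] by (simp add: linear_add linear_scale)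
  then have "(\<lambda>x. complex_of_real (f (cis x))) =
     (\<lambda>x. (of_real (f 1) / 2 + of_real (f \<i>) / (2 * \<i>)) * cis (x * of_int 1) +
          (of_real (f 1) / 2 - of_real (f \<i>) / (2 * \<i>)) * cis (x * of_int (-1)))"
    by (auto simp: complex_eq_iff field_simps)
  then show ?case by (simp only:) (rule trig_poly_add trig_poly_monomial)+
next
  case (const c)
  show ?case by (rule trig_poly_const)
next
  case (add f g)
  show ?case using trig_poly_add[OF add.IH] by (simp only: of_real_add)
next
  case (mult f g)
  show ?case using trig_poly_mult[OF mult.IH] by (simp only: of_real_mult)
qed

lemma trig_poly_mult_has_integral_0:
  fixes h :: "real \<Rightarrow> complex"
  assumes "\<And>n::int. ((\<lambda>x. cis (x * of_int n) * h x) has_integral 0) {-pi..pi}"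
  shows "trig_poly q \<Longrightarrow> ((\<lambda>x. q x * h x) has_integral 0) {-pi..pi}"
proof (induction rule: trig_poly.induct)
  case (trig_poly_monomial c n)
  show ?case using has_integral_mult_right[OF assms[of n], of c] by (simp add: mult.assoc)
next
  case (trig_poly_add f g)
  show ?case using has_integral_add[OF trig_poly_add.IH] by (simp add: distrib_right)
qed

lemma periodic_add_of_int_mult:
  fixes p :: "'a::ring_1"
  assumes per: "\<And>x. h (x + p) = h x"
  shows "h (x + of_int m * p) = h x"
proof -
  have nat: "h (y + of_nat n * p) = h y" for y n
  proof (induction n)
    case (Suc n)
    have "h (y + of_nat (Suc n) * p) = h ((y + of_nat n * p) + p)" by (simp add: algebra_simps)
    then show ?case using per Suc by simp
  qed simp
  show ?thesis
  proof (cases "m \<ge> 0")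
    case True
    then show ?thesis using nat[of x "nat m"] by simp
  next
    case False
    then show ?thesis using nat[of "x + of_int m * p" "nat (- m)"] by simp
  qed
qed

lemma periodic_in_interval:
  fixes p a x :: real
  assumes per: "\<And>x. h (x + p) = h x" and p: "p > 0"
  obtains y where "y \<in> {a..a + p}" "h x = h y"
proof -
  define m where "m = \<lfloor>(x - a) / p\<rfloor>"
  have "of_int m * p \<le> x - a" "x - a < (of_int m + 1) * p"
    using floor_divide_lower[OF p, of "x - a"] floor_divide_upper[OF p, of "x - a"]
    by (simp_all add: m_def)
  then have "x - of_int m * p \<in> {a..a + p}" by (simp add: algebra_simps)
  moreover have "h (x - of_int m * p + of_int m * p) = h (x - of_int m * p)"
    by (rule periodic_add_of_int_mult[where h = h, OF per])
  ultimately show ?thesis using that by simp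
qed

lemma periodic_cis_eq:
  assumes per: "\<And>x. h (x + 2 * pi) = h x" and eq: "cis a = cis b"
  shows "h a = h b"
proof -
  from eq obtain n :: int where "\<i> * of_real a = \<i> * of_real b + of_int (2 * n) * pi * \<i>"
    by (auto simp: cis_conv_exp exp_eq)
  then have "a = b + of_int n * (2 * pi)"
    by (auto simp: complex_eq_iff)
  then show ?thesis using periodic_add_of_int_mult[where h = h, OF per] by simp
qed

lemma cis_Arg2pi: "z \<noteq> 0 \<Longrightarrow> cis (Arg2pi z) = sgn z"
proof -
  assume z: "z \<noteq> 0"
  have "z = of_real (cmod z) * cis (Arg2pi z)"
    using Arg2pi[of z] by (simp add: is_Arg_def cis_conv_exp)
  then show ?thesis using z by (metis nonzero_mult_div_cancel_left norm_eq_zero of_real_eq_0_iff sgn_eq)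
qed

lemma continuous_on_sphere_periodic_Arg:
  fixes h :: "real \<Rightarrow> 'a::topological_space"
  assumes cont: "continuous_on UNIV h" and per: "\<And>x. h (x + 2 * pi) = h x"
  shows "continuous_on (sphere 0 1) (\<lambda>z. h (Arg z))"
proof (rule continuous_on_eq_continuous_within[THEN iffD2], intro ballI)
  fix z :: complex assume z: "z \<in> sphere 0 1"
  have hc: "isCont h x" for x using cont by (simp add: continuous_on_eq_continuous_at)
  show "continuous (at z within sphere 0 1) (\<lambda>z. h (Arg z))"
  proof (cases "z \<in> \<real>\<^sub>\<le>\<^sub>0")
    case False
    show ?thesis by (rule continuous_within_compose3[OF hc continuous_within_Arg[OF False]])
  next
    case True
    \<comment> \<open>Near the negative real axis, where \<open>Arg\<close> jumps, \<open>Arg2pi\<close> is continuous.\<close>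
    moreover have "z \<noteq> 0" using z by auto
    ultimately have "z \<notin> \<real>\<^sub>\<ge>\<^sub>0"
      by (auto simp: complex_nonpos_Reals_iff complex_nonneg_Reals_iff complex_eq_iff)
    then have "continuous (at z within sphere 0 1) (\<lambda>z. h (Arg2pi z))"
      by (rule continuous_within_compose3[OF hc
          continuous_at_imp_continuous_within[OF continuous_at_Arg2pi]])
    then show ?thesis
    proof (rule continuous_transform_within[OF _ zero_less_one z])
      fix w :: complex assume "w \<in> sphere 0 1"
      then have "w \<noteq> 0" by auto
      then show "h (Arg2pi w) = h (Arg w)"
        by (intro periodic_cis_eq[of h, OF per]) (simp add: cis_Arg cis_Arg2pi)
    qed
  qed
qed

lemma periodic_Arg_cis:
  assumes per: "\<And>x. h (x + 2 * pi) = h x"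
  shows "h (Arg (cis x)) = h x"
  by (rule periodic_cis_eq[of h, OF per]) (simp add: cis_Arg sgn_cis)

lemma trig_poly_approximation:
  fixes h :: "real \<Rightarrow> complex"
  assumes cont: "continuous_on UNIV h" and per: "\<And>x. h (x + 2 * pi) = h x" and e: "e > 0"
  obtains q where "trig_poly q" "\<And>x. norm (h x - q x) \<le> e"
proof -
  have cRe: "continuous_on (sphere 0 1) (\<lambda>z. Re (h (Arg z)))"
    and cIm: "continuous_on (sphere 0 1) (\<lambda>z. Im (h (Arg z)))"
    using per by (auto intro!: continuous_on_sphere_periodic_Arg continuous_intros cont)
  have e2: "e / 2 > 0" using e by simp
  obtain g1 where g1: "real_polynomial_function g1"
      "\<And>z. z \<in> sphere 0 1 \<Longrightarrow> \<bar>Re (h (Arg z)) - g1 z\<bar> < e / 2"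
    using Stone_Weierstrass_real_polynomial_function[OF compact_sphere cRe e2] by blast
  obtain g2 where g2: "real_polynomial_function g2"
      "\<And>z. z \<in> sphere 0 1 \<Longrightarrow> \<bar>Im (h (Arg z)) - g2 z\<bar> < e / 2"
    using Stone_Weierstrass_real_polynomial_function[OF compact_sphere cIm e2] by blast
  show ?thesis
  proof (rule that)
    show "trig_poly (\<lambda>x. of_real (g1 (cis x)) + \<i> * of_real (g2 (cis x)))"
      by (rule trig_poly_add[OF trig_poly_real_polynomial_function[OF g1(1)]
          trig_poly_mult[OF trig_poly_const trig_poly_real_polynomial_function[OF g2(1)]]])
    fix x
    define w where "w = h x - (of_real (g1 (cis x)) + \<i> * of_real (g2 (cis x)))"
    have "Re (h (Arg (cis x))) = Re (h x)" "Im (h (Arg (cis x))) = Im (h x)"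
      using periodic_Arg_cis[of "\<lambda>x. Re (h x)"] periodic_Arg_cis[of "\<lambda>x. Im (h x)"] per
      by simp_all
    then have "\<bar>Re w\<bar> < e / 2" "\<bar>Im w\<bar> < e / 2"
      using g1(2)[of "cis x"] g2(2)[of "cis x"] by (simp_all add: w_def)
    then have "norm w \<le> e" using cmod_le[of w] by linarith
    then show "norm (h x - (of_real (g1 (cis x)) + \<i> * of_real (g2 (cis x)))) \<le> e"
      by (simp only: w_def)
  qed
qed

lemma has_integral_cis_of_int:
  "((\<lambda>x. cis (x * of_int m)) has_integral (if m = 0 then complex_of_real (2 * pi) else 0)) {-pi..pi}"
proof (cases "m = 0")
  case True
  then show ?thesis using has_integral_const_real[of "1::complex" "-pi" pi]
    by (simp add: scaleR_conv_of_real)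
next
  case False
  define z where "z = \<i> * of_int m"
  have z: "z \<noteq> 0" and cis_z: "cis (x * of_int m) = exp (x *\<^sub>R z)" for x
    using False by (simp_all add: z_def cis_conv_exp scaleR_conv_of_real mult_ac)
  have "((\<lambda>x. exp (x *\<^sub>R z) * z / z) has_integral (exp (pi *\<^sub>R z) / z - exp ((- pi) *\<^sub>R z) / z)) {-pi..pi}"
    by (rule fundamental_theorem_of_calculus)
       (auto intro!: derivative_eq_intros exp_scaleR_has_vector_derivative_right simp: divide_inverse)
  moreover have "exp (pi *\<^sub>R z) = exp ((- pi) *\<^sub>R z)"
  proof -
    have "cis (pi * of_int m) = cis (- pi * of_int m) * cis (2 * pi * of_int m)"
      unfolding cis_mult by (rule arg_cong[where f = cis]) linarith
    also have "cis (2 * pi * of_int m) = 1" by simp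
    finally show ?thesis by (simp only: cis_z mult_1_right)
  qed
  ultimately show ?thesis using False z by (simp add: cis_z)
qed

lemma has_integral_infsum_uniform:
  fixes g :: "'i \<Rightarrow> real \<Rightarrow> 'b::banach"
  assumes bound: "\<And>s x. x \<in> {a..b} \<Longrightarrow> norm (g s x) \<le> M s" and M: "M summable_on UNIV"
    and cont: "\<And>s. continuous_on {a..b} (g s)"
    and int: "\<And>s. (g s has_integral I s) {a..b}"
  shows "((\<lambda>x. \<Sum>\<^sub>\<infinity>s. g s x) has_integral (\<Sum>\<^sub>\<infinity>s. I s)) {a..b}"
proof -
  have "uniform_limit {a..b} (\<lambda>X x. \<Sum>s\<in>X. g s x) (\<lambda>x. \<Sum>\<^sub>\<infinity>s. g s x) (finite_subsets_at_top UNIV)"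
    using bound M by (rule Weierstrass_m_test_general)
  moreover have "continuous_on {a..b} (\<lambda>x. \<Sum>s\<in>X. g s x)" for X
    by (intro continuous_on_sum cont)
  ultimately obtain I' J where I': "\<And>X. ((\<lambda>x. \<Sum>s\<in>X. g s x) has_integral I' X) {a..b}"
    and J: "((\<lambda>x. \<Sum>\<^sub>\<infinity>s. g s x) has_integral J) {a..b}"
    and lim: "(I' \<longlongrightarrow> J) (finite_subsets_at_top UNIV)"
    using uniform_limit_integral[OF _ _ finite_subsets_at_top_neq_bot] by blast
  have "\<forall>\<^sub>F X in finite_subsets_at_top UNIV. I' X = sum I X"
    by (rule eventually_finite_subsets_at_top_weakI)
       (use I' int in \<open>metis has_integral_sum has_integral_unique\<close>)
  with lim have "(I has_sum J) UNIV"
    unfolding has_sum_def by (rule Lim_transform_eventually)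
  then show ?thesis using J by (simp add: infsumI)
qed

lemma has_integral_cmod_power2_0_if_fourier_coeffs_0:
  fixes h :: "real \<Rightarrow> complex"
  assumes cont: "continuous_on UNIV h" and per: "\<And>x. h (x + 2 * pi) = h x"
    and orth: "\<And>n::int. ((\<lambda>x. cis (x * of_int n) * h x) has_integral 0) {-pi..pi}"
  shows "((\<lambda>x. (cmod (h x))\<^sup>2) has_integral 0) {-pi..pi}"
proof -
  have cont_pi: "continuous_on {-pi..pi} h" using cont by (rule continuous_on_subset) simp
  obtain M where M: "M > 0" "\<And>x. x \<in> {-pi..pi} \<Longrightarrow> norm (h x) \<le> M"
    using compact_imp_bounded[OF compact_continuous_image[OF cont_pi compact_Icc]] bounded_pos
    by (metis image_eqI)
  define F where "F x = h x * cnj (h x)" for x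
  have "F integrable_on {-pi..pi}"
    unfolding F_def by (intro integrable_continuous_interval continuous_intros cont_pi)
  then obtain I where I: "(F has_integral I) {-pi..pi}" by blast
  have "norm I \<le> \<epsilon>" if "\<epsilon> > 0" for \<epsilon>
  proof -
    define e where "e = \<epsilon> / (2 * pi * M)"
    have "e > 0" using that M by (simp add: e_def)
    then obtain q where q: "trig_poly q" "\<And>x. norm (cnj (h x) - q x) \<le> e"
      using trig_poly_approximation[of "\<lambda>x. cnj (h x)"] cont per
      by (metis continuous_on_cnj)
    \<comment> \<open>\<open>q\<close> is orthogonal to \<open>h\<close>, so \<open>I\<close> only sees the approximation error \<open>cnj h - q\<close>.\<close>
    have "((\<lambda>x. q x * h x) has_integral 0) {-pi..pi}"
      by (rule trig_poly_mult_has_integral_0[OF orth q(1)])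
    from has_integral_diff[OF I this]
    have hint: "((\<lambda>x. h x * (cnj (h x) - q x)) has_integral I) {-pi..pi}"
      by (simp add: F_def algebra_simps)
    have "norm (h x * (cnj (h x) - q x)) \<le> M * e" if "x \<in> {-pi..pi}" for x
      unfolding norm_mult using M q(2) that by (intro mult_mono) auto
    then have "norm I \<le> M * e * (pi - - pi)"
      using has_integral_bound_real[OF _ finite.emptyI hint] M \<open>e > 0\<close>
      by (simp add: content_real)
    also have "\<dots> = \<epsilon>" using M pi_gt_zero by (simp add: e_def)
    finally show ?thesis .
  qed
  then have "I = 0" by (metis norm_le_zero_iff dense not_le zero_less_norm_iff)
  then show ?thesis
    using has_integral_linear[OF I bounded_linear_Re]
    by (simp add: o_def F_def complex_mult_cnj cmod_power2)
qed

lemma periodic_fourier_uniqueness: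
  fixes h :: "real \<Rightarrow> complex"
  assumes cont: "continuous_on UNIV h" and per: "\<And>x. h (x + 2 * pi) = h x"
    and orth: "\<And>n::int. ((\<lambda>x. cis (x * of_int n) * h x) has_integral 0) {-pi..pi}"
  shows "h x = 0"
proof -
  have "continuous_on {-pi..pi} h" using cont by (rule continuous_on_subset) simp
  then have zero_pi: "h y = 0" if "y \<in> {-pi..pi}" for y
    using has_integral_0_cbox_imp_0[of "-pi" pi "\<lambda>x. (cmod (h x))\<^sup>2" y] that pi_gt_zero
      has_integral_cmod_power2_0_if_fourier_coeffs_0[OF cont per orth]
      continuous_on_power[OF continuous_on_norm, of _ h 2]
    by (auto simp: box_real)
  obtain y where "y \<in> {-pi..-pi + 2 * pi}" "h x = h y"
    using periodic_in_interval[where h = h and a = "-pi" and x = x, OF per] by auto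
  then show ?thesis using zero_pi by simp
qed

lemma cis_add_2pi: "cis (x + 2 * pi) = cis x"
  by (simp add: cis_mult[symmetric])

lemma continuous_on_fourier_series:
  fixes c :: "int \<Rightarrow> complex"
  assumes summ: "(\<lambda>s. norm (c s)) summable_on UNIV"
  shows "continuous_on UNIV (\<lambda>x. \<Sum>\<^sub>\<infinity>s. c s * cis (- (x * of_int s)))"
proof -
  have "uniform_limit UNIV (\<lambda>X x. \<Sum>s\<in>X. c s * cis (- (x * of_int s)))
      (\<lambda>x. \<Sum>\<^sub>\<infinity>s. c s * cis (- (x * of_int s))) (finite_subsets_at_top UNIV)"
    by (rule Weierstrass_m_test_general[OF _ summ]) (simp add: norm_mult)
  then show ?thesis
    by (rule uniform_limit_theorem[rotated])
       (auto intro!: always_eventually continuous_intros simp: cis_conv_exp)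
qed

lemma has_integral_fourier_series_coeff:
  fixes c :: "int \<Rightarrow> complex"
  assumes summ: "(\<lambda>s. norm (c s)) summable_on UNIV"
  shows "((\<lambda>x. cis (x * of_int t) * (\<Sum>\<^sub>\<infinity>s. c s * cis (- (x * of_int s)))) has_integral
           2 * pi * c t) {-pi..pi}"
proof -
  have int_s: "((\<lambda>x. c s * cis (x * of_int (t - s))) has_integral
      (if s = t then 2 * pi * c t else 0)) {-pi..pi}" for s
    using has_integral_mult_right[OF has_integral_cis_of_int[of "t - s"], of "c s"]
    by (auto simp: mult.commute)
  have "((\<lambda>x. \<Sum>\<^sub>\<infinity>s. c s * cis (x * of_int (t - s))) has_integral
      (\<Sum>\<^sub>\<infinity>s. if s = t then 2 * pi * c t else 0)) {-pi..pi}"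
    by (rule has_integral_infsum_uniform[OF _ summ _ int_s])
       (simp add: norm_mult, auto simp: cis_conv_exp intro!: continuous_intros)
  moreover have "(\<Sum>\<^sub>\<infinity>s. c s * cis (x * of_int (t - s))) =
      cis (x * of_int t) * (\<Sum>\<^sub>\<infinity>s. c s * cis (- (x * of_int s)))" for x
    by (simp add: cis_mult algebra_simps flip: infsum_cmult_right')
  moreover have "(\<Sum>\<^sub>\<infinity>s. if s = t then 2 * pi * c t else 0) = 2 * pi * c t"
    by (subst infsum_cong_neutral[where T = "{t}" and g = "\<lambda>_. 2 * pi * c t"]) auto
  ultimately show ?thesis by simp
qed

lemma fourier_inversion:
  fixes p :: "real \<Rightarrow> complex" and c :: "int \<Rightarrow> complex"
  assumes cont: "continuous_on UNIV p" and per: "\<And>x. p (x + 2 * pi) = p x"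
    and c: "\<And>s. c s = integral {-pi..pi} (\<lambda>x. cis (x * of_int s) * p x) / (2 * pi)"
    and summ: "(\<lambda>s. norm (c s)) summable_on UNIV"
  shows "((\<lambda>s. c s * cis (- (x * of_int s))) has_sum p x) UNIV"
proof -
  define G where "G = (\<lambda>x. \<Sum>\<^sub>\<infinity>s. c s * cis (- (x * of_int s)))"
  have per_G: "G (x + 2 * pi) = G x" for x
  proof -
    have "cis (- ((x + 2 * pi) * of_int s)) = cis (- (x * of_int s))" for s
      using periodic_add_of_int_mult[where h = cis and p = "2 * pi", OF cis_add_2pi,
          of "- (x * of_int s)" "- s"]
      by (simp add: algebra_simps)
    then show ?thesis by (simp add: G_def)
  qed
  have coeff_p: "((\<lambda>x. cis (x * of_int t) * p x) has_integral (2 * pi * c t)) {-pi..pi}" for t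
  proof -
    have "(\<lambda>x. cis (x * of_int t) * p x) integrable_on {-pi..pi}"
      by (intro integrable_continuous_interval continuous_intros continuous_on_subset[OF cont])
         (auto simp: cis_conv_exp intro!: continuous_intros)
    then show ?thesis by (simp add: c has_integral_integral)
  qed
  have "p x - G x = 0"
  proof (rule periodic_fourier_uniqueness[where h = "\<lambda>x. p x - G x"])
    show "continuous_on UNIV (\<lambda>x. p x - G x)"
      unfolding G_def by (intro continuous_intros cont continuous_on_fourier_series[OF summ])
    show "p (y + 2 * pi) - G (y + 2 * pi) = p y - G y" for y by (simp add: per per_G)
    show "((\<lambda>x. cis (x * of_int n) * (p x - G x)) has_integral 0) {-pi..pi}" for n
      using has_integral_diff[OF coeff_p has_integral_fourier_series_coeff[OF summ], of n n]
      by (simp add: G_def right_diff_distrib)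
  qed
  moreover have "(\<lambda>s. c s * cis (- (x * of_int s))) summable_on UNIV"
    by (rule abs_summable_summable) (simp add: norm_mult summ)
  ultimately show ?thesis by (simp add: G_def)
qed

section \<open>Lattice sums\<close>

lemma has_sum_sum:
  fixes f :: "'i \<Rightarrow> 'a \<Rightarrow> 'b::topological_comm_monoid_add"
  assumes "finite I" and "\<And>i. i \<in> I \<Longrightarrow> (f i has_sum s i) A"
  shows "((\<lambda>x. \<Sum>i\<in>I. f i x) has_sum (\<Sum>i\<in>I. s i)) A"
  using assms by (induction I rule: finite_induct) (simp_all add: has_sum_add)

lemma has_sum_vecI:
  fixes f :: "'a \<Rightarrow> 'b::topological_comm_monoid_add^'n"
  assumes "\<And>i. ((\<lambda>n. f n $ i) has_sum S $ i) A"
  shows "(f has_sum S) A"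
  using assms unfolding has_sum_def by (intro vec_tendstoI) simp

lemma has_sum_residue_class_iff:
  fixes c :: "int \<Rightarrow> 'a::topological_comm_monoid_add" and L r :: int
  assumes "L \<noteq> 0"
  shows "((\<lambda>s. if L dvd (r - s) then c s else 0) has_sum x) UNIV \<longleftrightarrow>
         ((\<lambda>n. c (r + n * L)) has_sum x) UNIV"
proof -
  have range: "range (\<lambda>n. r + n * L) = {s. L dvd (r - s)}"
  proof (intro set_eqI iffI)
    fix s assume "s \<in> {s. L dvd (r - s)}"
    then obtain q where "r - s = L * q" by auto
    then show "s \<in> range (\<lambda>n. r + n * L)" by (intro range_eqI[of _ _ "- q"]) (simp add: algebra_simps)
  qed auto
  have "inj (\<lambda>n. r + n * L)" using assms by (simp add: inj_def)
  then have "((\<lambda>n. c (r + n * L)) has_sum x) UNIV \<longleftrightarrow> (c has_sum x) (range (\<lambda>n. r + n * L))"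
    by (simp add: has_sum_reindex o_def)
  also have "\<dots> \<longleftrightarrow> ((\<lambda>s. if L dvd (r - s) then c s else 0) has_sum x) UNIV"
    unfolding range by (rule has_sum_cong_neutral) auto
  finally show ?thesis by simp
qed

lemma sum_cis_roots_of_unity:
  fixes L :: nat and t :: int
  assumes L: "L > 0"
  shows "(\<Sum>m\<in>{1..L}. cis (2 * pi * real m / real L * of_int t)) = (if int L dvd t then of_nat L else 0)"
proof (cases "int L dvd t")
  case True
  then obtain q where "t = int L * q" by blast
  then have "cis (2 * pi * real m / real L * of_int t) = 1" for m
    using L cis_multiple_2pi[of "of_int (int m * q)"] by (simp add: field_simps)
  then show ?thesis using True by simp
next
  case False
  define w where "w = cis (2 * pi * of_int t / real L)"
  have pw: "cis (2 * pi * real m / real L * of_int t) = w ^ m" for m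
    unfolding w_def Complex.DeMoivre by (simp add: field_simps)
  have "w \<noteq> 1"
  proof
    assume "w = 1"
    then obtain n :: int where "2 * pi * of_int t / real L = 2 * pi * of_int n"
      by (auto simp: w_def cis_conv_exp exp_eq_1)
    then have "t = int L * n"
      using L by (simp add: field_simps) (metis of_int_eq_iff of_int_mult of_int_of_nat_eq)
    then show False using False by simp
  qed
  moreover have "w ^ L = 1"
    unfolding w_def Complex.DeMoivre using L cis_multiple_2pi[of "of_int t"] by simp
  ultimately have "(\<Sum>m\<in>{1..L}. w ^ m) = 0"
    by (simp add: sum.atLeast1_atMost_eq sum_distrib_left[symmetric] geometric_sum)
  moreover have "(\<Sum>m\<in>{1..L}. cis (2 * pi * real m / real L * of_int t)) = (\<Sum>m\<in>{1..L}. w ^ m)"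
    by (intro sum.cong refl pw)
  ultimately show ?thesis using False by simp
qed

lemma int_pos_Un_neg_eq: "int ` {1..} \<union> (\<lambda>n. - int n) ` {1..} = UNIV - {0}"
proof -
  have "x \<in> int ` {1..} \<union> (\<lambda>n. - int n) ` {1..}" if "x \<noteq> 0" for x :: int
  proof (cases "x > 0")
    case True
    then show ?thesis by (intro UnI1 image_eqI[of _ _ "nat x"]) auto
  next
    case False
    then show ?thesis using that by (intro UnI2 image_eqI[of _ _ "nat (- x)"]) auto
  qed
  then show ?thesis by auto
qed

lemma has_sum_exp_neg_abs_lattice:
  fixes \<kappa> L r :: real
  assumes \<kappa>: "\<kappa> > 0" and L: "L > 0" and r: "\<bar>r\<bar> < L"
  shows "((\<lambda>n::int. exp (- \<kappa> * \<bar>r + of_int n * L\<bar>)) has_sum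
           2 * cosh (\<kappa> * r) / (exp (\<kappa> * L) - 1)) (UNIV - {0})"
proof -
  define z where "z = exp (- \<kappa> * L)"
  have z: "0 < z" "z < 1" using \<kappa> L by (auto simp: z_def)
  have z_norm: "norm z < 1" using z by simp
  have geom: "z / (1 - z) = 1 / (exp (\<kappa> * L) - 1)"
    using \<kappa> L by (simp add: z_def exp_minus field_simps)
  define F where "F = (\<lambda>n::int. exp (- \<kappa> * \<bar>r + of_int n * L\<bar>))"
  \<comment> \<open>For \<open>n \<noteq> 0\<close> the sign of \<open>r + n L\<close> is that of \<open>n\<close>, so each half is a geometric series.\<close>
  have pos: "F (int n) = exp (- \<kappa> * r) * z ^ n" and neg: "F (- int n) = exp (\<kappa> * r) * z ^ n"
    if "n \<in> {1..}" for n
  proof -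
    have "real n * L \<ge> L" using that L by simp
    then have "\<bar>r + real n * L\<bar> = r + real n * L" and "\<bar>r - real n * L\<bar> = real n * L - r"
      using r by auto
    then show "F (int n) = exp (- \<kappa> * r) * z ^ n" "F (- int n) = exp (\<kappa> * r) * z ^ n"
      by (simp_all add: F_def z_def algebra_simps flip: exp_add exp_of_nat_mult)
  qed
  have "((\<lambda>n. F (int n)) has_sum exp (- \<kappa> * r) * (z / (1 - z))) {1..}"
    using has_sum_cong[of "{1..}" "\<lambda>n. F (int n)", OF pos]
      has_sum_cmult_right[OF has_sum_geometric_from_1[OF z_norm]] by blast
  then have "(F has_sum exp (- \<kappa> * r) * (z / (1 - z))) (int ` {1..})"
    by (subst has_sum_reindex) (auto simp: o_def)
  moreover have "((\<lambda>n. F (- int n)) has_sum exp (\<kappa> * r) * (z / (1 - z))) {1..}"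
    using has_sum_cong[of "{1..}" "\<lambda>n. F (- int n)", OF neg]
      has_sum_cmult_right[OF has_sum_geometric_from_1[OF z_norm]] by blast
  then have "(F has_sum exp (\<kappa> * r) * (z / (1 - z))) ((\<lambda>n. - int n) ` {1..})"
    by (subst has_sum_reindex) (auto simp: inj_on_def o_def)
  ultimately have "(F has_sum (exp (- \<kappa> * r) + exp (\<kappa> * r)) * (z / (1 - z)))
      (int ` {1..} \<union> (\<lambda>n. - int n) ` {1..})"
    by (subst distrib_right, intro has_sum_Un_disjoint) auto
  then have "(F has_sum (exp (- \<kappa> * r) + exp (\<kappa> * r)) * (z / (1 - z))) (UNIV - {0})"
    by (simp only: int_pos_Un_neg_eq)
  moreover have "(exp (- \<kappa> * r) + exp (\<kappa> * r)) * (z / (1 - z)) = 2 * cosh (\<kappa> * r) / (exp (\<kappa> * L) - 1)"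
    using \<kappa> L by (simp add: geom cosh_def field_simps)
  ultimately show ?thesis by (simp only: F_def)
qed

lemma summable_on_exp_neg_abs_int:
  fixes \<kappa> :: real
  assumes "\<kappa> > 0"
  shows "(\<lambda>s::int. exp (- \<kappa> * \<bar>of_int s\<bar>)) summable_on UNIV"
proof -
  have "(\<lambda>s::int. exp (- \<kappa> * \<bar>of_int s\<bar>)) summable_on (UNIV - {0})"
    using has_sum_exp_neg_abs_lattice[OF assms, of 1 0] by (auto intro: has_sum_imp_summable)
  then have "(\<lambda>s::int. exp (- \<kappa> * \<bar>of_int s\<bar>)) summable_on (insert 0 (UNIV - {0}))"
    by (rule summable_on_insert_iff[THEN iffD2])
  then show ?thesis by (simp add: insert_Diff_single)
qed

lemma sinh_superadditive:
  fixes a b :: real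
  assumes "a \<ge> 0" "b \<ge> 0"
  shows "sinh a + sinh b \<le> sinh (a + b)"
proof -
  have "sinh a \<le> sinh a * cosh b" "sinh b \<le> cosh a * sinh b"
    using assms by (simp_all add: cosh_real_ge_1 mult_le_cancel_left1 mult_le_cancel_right1)
  then show ?thesis by (simp add: sinh_add)
qed

lemma sinh_mult_sum_cosh:
  fixes \<kappa> :: real and j :: int
  shows "2 * sinh \<kappa> * (\<Sum>j'\<in>{1..int l}. cosh (\<kappa> * of_int (j - j'))) =
     sinh (\<kappa> * j) + sinh (\<kappa> * (j - 1)) - sinh (\<kappa> * (j - l)) - sinh (\<kappa> * (j - l - 1))"
proof (induction l)
  case (Suc l)
  \<comment> \<open>Telescoping: \<open>2 sinh \<kappa> cosh y = sinh (y + \<kappa>) - sinh (y - \<kappa>)\<close>.\<close>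
  have "2 * sinh \<kappa> * cosh (\<kappa> * of_int (j - (int l + 1))) =
      sinh (\<kappa> * (j - l)) - sinh (\<kappa> * (j - l - 2))"
  proof -
    have shift: "\<kappa> * (j - l) = \<kappa> * of_int (j - (int l + 1)) + \<kappa>"
      "\<kappa> * (j - l - 2) = \<kappa> * of_int (j - (int l + 1)) - \<kappa>"
      by (simp_all add: algebra_simps)
    show ?thesis unfolding shift sinh_add sinh_diff by (simp add: algebra_simps)
  qed
  moreover have "{1..int (Suc l)} = insert (int l + 1) {1..int l}" by auto
  ultimately show ?case using Suc by (simp add: algebra_simps)
qed simp

lemma sum_cosh_diff_le:
  fixes \<kappa> :: real and j :: int
  assumes \<kappa>: "\<kappa> > 0" and j: "1 \<le> j" "j \<le> int l"
  shows "(\<Sum>j'\<in>{1..int l}. cosh (\<kappa> * of_int (j - j'))) \<le> sinh (\<kappa> * l) / sinh \<kappa>"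
proof -
  have nonneg: "0 \<le> \<kappa> * j" "0 \<le> \<kappa> * (l - j)" "0 \<le> \<kappa> * (j - 1)" "0 \<le> \<kappa> * (l - j + 1)"
    using \<kappa> j by simp_all
  have "sinh (\<kappa> * j) + sinh (\<kappa> * (l - j)) \<le> sinh (\<kappa> * l)"
    using sinh_superadditive[OF nonneg(1,2)] by (simp add: algebra_simps)
  moreover have "sinh (\<kappa> * (j - 1)) + sinh (\<kappa> * (l - j + 1)) \<le> sinh (\<kappa> * l)"
    using sinh_superadditive[OF nonneg(3,4)] by (simp add: algebra_simps)
  moreover have "sinh (\<kappa> * (j - l)) = - sinh (\<kappa> * (l - j))"
    and "sinh (\<kappa> * (j - l - 1)) = - sinh (\<kappa> * (l - j + 1))"
    by (simp_all add: sinh_minus[symmetric] algebra_simps)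
  ultimately have "2 * sinh \<kappa> * (\<Sum>j'\<in>{1..int l}. cosh (\<kappa> * of_int (j - j'))) \<le> 2 * sinh (\<kappa> * l)"
    unfolding sinh_mult_sum_cosh by linarith
  then show ?thesis using \<kappa> by (simp add: field_simps)
qed

section \<open>Operator norms of block matrices\<close>

definition mat_apply :: "('n::finite \<Rightarrow> 'n \<Rightarrow> complex) \<Rightarrow> complex^'n \<Rightarrow> complex^'n" where
  "mat_apply M x = (\<chi> a. \<Sum>b\<in>UNIV. M a b * x $ b)"

lemma has_sum_mat_apply:
  fixes M :: "'i \<Rightarrow> 'n::finite \<Rightarrow> 'n \<Rightarrow> complex"
  assumes "\<And>a b. ((\<lambda>i. M i a b) has_sum N a b) A"
  shows "((\<lambda>i. mat_apply (M i) x) has_sum mat_apply N x) A"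
proof (rule has_sum_vecI)
  fix a
  show "((\<lambda>i. mat_apply (M i) x $ a) has_sum mat_apply N x $ a) A"
    unfolding mat_apply_def vec_lambda_beta
    by (rule has_sum_sum) (simp_all add: has_sum_cmult_left assms)
qed

lemma norm_vec_power2: "(norm (x :: complex^'n))\<^sup>2 = (\<Sum>a\<in>UNIV. (cmod (x $ a))\<^sup>2)"
  by (simp add: norm_vec_def L2_set_def sum_nonneg)

lemma norm_axis_complex: "norm (axis b (1::complex)) = 1"
proof -
  have "(\<Sum>i\<in>UNIV. (cmod (axis b (1::complex) $ i))\<^sup>2) = (\<Sum>i\<in>UNIV. if i = b then 1 else 0)"
    by (rule sum.cong) (auto simp: axis_def)
  then show ?thesis by (simp add: norm_vec_def L2_set_def)
qed

lemma mat_opnorm_bdd_above: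
  fixes M :: "'n::finite \<Rightarrow> 'n \<Rightarrow> complex"
  shows "bdd_above ((\<lambda>v. sqrt (\<Sum>i\<in>UNIV. (cmod (\<Sum>j\<in>UNIV. M i j * v j))\<^sup>2)) `
           {v. (\<Sum>i\<in>UNIV. (cmod (v i))\<^sup>2) \<le> 1})"
proof (rule bdd_aboveI2)
  fix v :: "'n \<Rightarrow> complex" assume "v \<in> {v. (\<Sum>i\<in>UNIV. (cmod (v i))\<^sup>2) \<le> 1}"
  then have "(cmod (v j))\<^sup>2 \<le> 1" for j
    using member_le_sum[of j UNIV "\<lambda>i. (cmod (v i))\<^sup>2"] by simp
  then have v1: "cmod (v j) \<le> 1" for j
    by (simp add: power_le_one_iff)
  have "cmod (\<Sum>j\<in>UNIV. M i j * v j) \<le> (\<Sum>j\<in>UNIV. cmod (M i j))" for i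
    by (rule order_trans[OF norm_sum sum_mono]) (simp add: norm_mult mult_left_le v1)
  then have "L2_set (\<lambda>i. cmod (\<Sum>j\<in>UNIV. M i j * v j)) UNIV \<le> (\<Sum>i\<in>UNIV. \<Sum>j\<in>UNIV. cmod (M i j))"
    by (intro order_trans[OF L2_set_le_sum sum_mono]) auto
  then show "sqrt (\<Sum>i\<in>UNIV. (cmod (\<Sum>j\<in>UNIV. M i j * v j))\<^sup>2) \<le> (\<Sum>i\<in>UNIV. \<Sum>j\<in>UNIV. cmod (M i j))"
    by (simp add: L2_set_def)
qed

lemma mat_opnorm_upper:
  fixes M :: "'n::finite \<Rightarrow> 'n \<Rightarrow> complex"
  assumes "(\<Sum>i\<in>UNIV. (cmod (v i))\<^sup>2) \<le> 1"
  shows "sqrt (\<Sum>i\<in>UNIV. (cmod (\<Sum>j\<in>UNIV. M i j * v j))\<^sup>2) \<le> mat_opnorm UNIV M"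
  unfolding mat_opnorm_def by (rule cSUP_upper[OF _ mat_opnorm_bdd_above]) (use assms in simp)

lemma mat_opnorm_nonneg: "mat_opnorm UNIV (M :: 'n::finite \<Rightarrow> 'n \<Rightarrow> complex) \<ge> 0"
  using mat_opnorm_upper[of "\<lambda>_. 0" M] by simp

lemma norm_mat_apply_le:
  fixes M :: "'n::finite \<Rightarrow> 'n \<Rightarrow> complex"
  shows "norm (mat_apply M x) \<le> mat_opnorm UNIV M * norm x"
proof (cases "x = 0")
  case True
  then have "mat_apply M x = 0" by (simp add: mat_apply_def vec_eq_iff)
  then show ?thesis using True by simp
next
  case False
  define v where "v b = x $ b / norm x" for b
  have "(\<Sum>i\<in>UNIV. (cmod (v i))\<^sup>2) = (\<Sum>i\<in>UNIV. (cmod (x $ i))\<^sup>2) / (norm x)\<^sup>2"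
    by (simp add: v_def norm_divide power_divide sum_divide_distrib)
  also have "\<dots> = 1" using False by (simp add: norm_vec_power2[symmetric])
  finally have v: "(\<Sum>i\<in>UNIV. (cmod (v i))\<^sup>2) \<le> 1" by simp
  have "(\<Sum>j\<in>UNIV. M i j * v j) = mat_apply M x $ i / norm x" for i
    by (simp add: mat_apply_def v_def sum_divide_distrib)
  then have "(\<Sum>i\<in>UNIV. (cmod (\<Sum>j\<in>UNIV. M i j * v j))\<^sup>2) = (norm (mat_apply M x))\<^sup>2 / (norm x)\<^sup>2"
    by (simp add: norm_divide power_divide sum_divide_distrib norm_vec_power2)
  then have "sqrt (\<Sum>i\<in>UNIV. (cmod (\<Sum>j\<in>UNIV. M i j * v j))\<^sup>2) = norm (mat_apply M x) / norm x"
    by (simp add: real_sqrt_divide)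
  then have "norm (mat_apply M x) / norm x \<le> mat_opnorm UNIV M"
    using mat_opnorm_upper[OF v, of M] by simp
  then show ?thesis using False by (simp add: divide_le_eq)
qed

lemma mat_opnorm_le:
  fixes M :: "'n::finite \<Rightarrow> 'n \<Rightarrow> complex"
  assumes bound: "\<And>x. norm (mat_apply M x) \<le> K * norm x"
  shows "mat_opnorm UNIV M \<le> K"
  unfolding mat_opnorm_def
proof (rule cSUP_least)
  have "(\<lambda>_. 0) \<in> {v :: 'n \<Rightarrow> complex. (\<Sum>i\<in>UNIV. (cmod (v i))\<^sup>2) \<le> 1}" by simp
  then show "{v :: 'n \<Rightarrow> complex. (\<Sum>i\<in>UNIV. (cmod (v i))\<^sup>2) \<le> 1} \<noteq> {}" by (metis empty_iff)
  have K: "0 \<le> K"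
    using order_trans[OF norm_ge_zero bound[of "axis undefined 1"]] by (simp add: norm_axis_complex)
  fix v :: "'n \<Rightarrow> complex" assume v: "v \<in> {v. (\<Sum>i\<in>UNIV. (cmod (v i))\<^sup>2) \<le> 1}"
  define x where "x = vec_lambda v"
  have "sqrt (\<Sum>i\<in>UNIV. (cmod (\<Sum>j\<in>UNIV. M i j * v j))\<^sup>2) = norm (mat_apply M x)"
    by (simp add: x_def mat_apply_def norm_vec_def L2_set_def)
  also have "\<dots> \<le> K * norm x" by (rule bound)
  also have "\<dots> \<le> K"
    using v K by (simp add: x_def norm_vec_def L2_set_def mult_left_le)
  finally show "sqrt (\<Sum>i\<in>UNIV. (cmod (\<Sum>j\<in>UNIV. M i j * v j))\<^sup>2) \<le> K" .
qed

lemma norm_entry_le_mat_opnorm: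
  fixes M :: "'n::finite \<Rightarrow> 'n \<Rightarrow> complex"
  shows "cmod (M a b) \<le> mat_opnorm UNIV M"
proof -
  have "mat_apply M (axis b 1) $ a = M a b"
    by (simp add: mat_apply_def axis_def if_distrib cong: if_cong)
  then show ?thesis
    using Finite_Cartesian_Product.norm_nth_le[of "mat_apply M (axis b 1)" a] norm_mat_apply_le[of M "axis b 1"]
    by (simp add: norm_axis_complex)
qed

lemma schur_test:
  fixes a :: "'i \<Rightarrow> 'i \<Rightarrow> real" and t :: "'i \<Rightarrow> real"
  assumes S: "finite S" and a0: "\<And>i j. i \<in> S \<Longrightarrow> j \<in> S \<Longrightarrow> a i j \<ge> 0"
    and row: "\<And>i. i \<in> S \<Longrightarrow> (\<Sum>j\<in>S. a i j) \<le> R"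
    and col: "\<And>j. j \<in> S \<Longrightarrow> (\<Sum>i\<in>S. a i j) \<le> R"
  shows "(\<Sum>i\<in>S. (\<Sum>j\<in>S. a i j * t j)\<^sup>2) \<le> R\<^sup>2 * (\<Sum>j\<in>S. (t j)\<^sup>2)"
proof (cases "S = {}")
  case False
  then obtain i0 where "i0 \<in> S" by blast
  then have R0: "R \<ge> 0" using row[of i0] a0 by (meson order_trans sum_nonneg)
  have row_CS: "(\<Sum>j\<in>S. a i j * t j)\<^sup>2 \<le> R * (\<Sum>j\<in>S. a i j * (t j)\<^sup>2)" if i: "i \<in> S" for i
  proof -
    have "(\<Sum>j\<in>S. a i j * t j) = (\<Sum>j\<in>S. sqrt (a i j) * (sqrt (a i j) * t j))"
      by (rule sum.cong) (use a0 i in \<open>auto simp: mult.assoc[symmetric]\<close>)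
    then have "(\<Sum>j\<in>S. a i j * t j)\<^sup>2 \<le> (\<Sum>j\<in>S. (sqrt (a i j))\<^sup>2) * (\<Sum>j\<in>S. (sqrt (a i j) * t j)\<^sup>2)"
      using Cauchy_Schwarz_ineq_sum by metis
    also have "\<dots> = (\<Sum>j\<in>S. a i j) * (\<Sum>j\<in>S. a i j * (t j)\<^sup>2)"
      using a0 i by (simp add: power_mult_distrib)
    also have "\<dots> \<le> R * (\<Sum>j\<in>S. a i j * (t j)\<^sup>2)"
      by (rule mult_right_mono[OF row[OF i]]) (use a0 i in \<open>auto intro: sum_nonneg\<close>)
    finally show ?thesis .
  qed
  have "(\<Sum>i\<in>S. (\<Sum>j\<in>S. a i j * t j)\<^sup>2) \<le> (\<Sum>i\<in>S. R * (\<Sum>j\<in>S. a i j * (t j)\<^sup>2))"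
    by (rule sum_mono) (rule row_CS)
  also have "\<dots> = R * (\<Sum>i\<in>S. \<Sum>j\<in>S. a i j * (t j)\<^sup>2)"
    by (simp add: sum_distrib_left)
  also have "\<dots> = R * (\<Sum>j\<in>S. (\<Sum>i\<in>S. a i j) * (t j)\<^sup>2)"
    by (subst sum.swap) (simp add: sum_distrib_right)
  also have "\<dots> \<le> R * (\<Sum>j\<in>S. R * (t j)\<^sup>2)"
    by (intro mult_left_mono sum_mono mult_right_mono col R0) auto
  finally show ?thesis
    by (simp add: sum_distrib_left power2_eq_square mult.assoc)
qed simp

lemma mat_opnorm_block_le:
  fixes B :: "'j \<Rightarrow> 'j \<Rightarrow> 'n::finite \<Rightarrow> 'n \<Rightarrow> complex" and \<beta> :: "'j \<Rightarrow> 'j \<Rightarrow> real"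
  assumes S: "finite S"
    and block: "\<And>j j'. j \<in> S \<Longrightarrow> j' \<in> S \<Longrightarrow> mat_opnorm UNIV (B j j') \<le> \<beta> j j'"
    and row: "\<And>j. j \<in> S \<Longrightarrow> (\<Sum>j'\<in>S. \<beta> j j') \<le> R"
    and col: "\<And>j'. j' \<in> S \<Longrightarrow> (\<Sum>j\<in>S. \<beta> j j') \<le> R"
    and R: "R \<ge> 0"
  shows "mat_opnorm (S \<times> UNIV) (\<lambda>(j, a) (j', b). B j j' a b) \<le> R"
  unfolding mat_opnorm_def
proof (rule cSUP_least)
  have "(\<lambda>_. 0) \<in> {v. (\<Sum>i\<in>S \<times> UNIV. (cmod (v i))\<^sup>2) \<le> (1::real)}" by simp
  then show "{v. (\<Sum>i\<in>S \<times> UNIV. (cmod (v i))\<^sup>2) \<le> 1} \<noteq> {}" by (metis empty_iff)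
  fix v :: "'j \<times> 'n \<Rightarrow> complex"
  assume "v \<in> {v. (\<Sum>i\<in>S \<times> UNIV. (cmod (v i))\<^sup>2) \<le> 1}"
  then have v: "(\<Sum>i\<in>S \<times> UNIV. (cmod (v i))\<^sup>2) \<le> 1" by simp
  define x where "x j = (\<chi> b. v (j, b))" for j
  define y where "y j = (\<Sum>j'\<in>S. mat_apply (B j j') (x j'))" for j
  have "(\<Sum>i\<in>S \<times> UNIV. (cmod (\<Sum>k\<in>S \<times> UNIV. (\<lambda>(j, a) (j', b). B j j' a b) i k * v k))\<^sup>2)
      = (\<Sum>j\<in>S. (norm (y j))\<^sup>2)"
    by (simp add: sum.cartesian_product' norm_vec_power2 y_def x_def mat_apply_def)
  moreover have "(\<Sum>j\<in>S. (norm (y j))\<^sup>2) \<le> R\<^sup>2"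
  proof -
    have block_apply: "norm (mat_apply (B j j') z) \<le> \<beta> j j' * norm z" if "j \<in> S" "j' \<in> S" for j j' z
      using order_trans[OF norm_mat_apply_le mult_right_mono[OF block[OF that] norm_ge_zero]] .
    have "norm (y j) \<le> (\<Sum>j'\<in>S. \<beta> j j' * norm (x j'))" if "j \<in> S" for j
      unfolding y_def using that by (intro order_trans[OF norm_sum sum_mono] block_apply)
    then have "(\<Sum>j\<in>S. (norm (y j))\<^sup>2) \<le> (\<Sum>j\<in>S. (\<Sum>j'\<in>S. \<beta> j j' * norm (x j'))\<^sup>2)"
      by (intro sum_mono power_mono) auto
    also have "\<dots> \<le> R\<^sup>2 * (\<Sum>j\<in>S. (norm (x j))\<^sup>2)"
      using order_trans[OF mat_opnorm_nonneg block] by (intro schur_test[OF S] row col)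
    also have "\<dots> \<le> R\<^sup>2"
    proof (rule mult_left_le)
      show "(\<Sum>j\<in>S. (norm (x j))\<^sup>2) \<le> 1"
        using v by (simp add: sum.cartesian_product' norm_vec_power2 x_def)
    qed simp
    finally show ?thesis .
  qed
  ultimately show "sqrt (\<Sum>i\<in>S \<times> UNIV. (cmod (\<Sum>k\<in>S \<times> UNIV. (\<lambda>(j, a) (j', b). B j j' a b) i k * v k))\<^sup>2) \<le> R"
    using R by (simp add: real_le_lsqrt)
qed

section \<open>Aliasing\<close>

lemma PL_block_aliasing:
  fixes Pk :: "real \<Rightarrow> 'n \<Rightarrow> 'n \<Rightarrow> complex" and L :: nat and r :: int
  assumes cont: "continuous_on UNIV (\<lambda>k. Pk k a b)" and per: "\<And>k. Pk (k + 2 * pi) a b = Pk k a b"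
    and L: "L > 0" and summ: "(\<lambda>s. cmod (Pinf_block Pk s 0 a b)) summable_on UNIV"
  shows "((\<lambda>n. Pinf_block Pk (r + n * int L) 0 a b) has_sum
           PL_block Pk L r 0 a b - Pinf_block Pk r 0 a b) (UNIV - {0})"
proof -
  define c where "c s = Pinf_block Pk s 0 a b" for s
  define k where "k m = 2 * pi * real m / real L" for m :: nat
  have inversion: "((\<lambda>s. c s * cis (- (x * of_int s))) has_sum Pk x a b) UNIV" for x
    by (rule fourier_inversion[where p = "\<lambda>k. Pk k a b", OF cont per])
       (use summ in \<open>simp_all add: c_def Pinf_block_def cis_conv_exp\<close>)
  have sample: "cis (k m * of_int r) / of_nat L * (c s * cis (- (k m * of_int s))) =
      c s / of_nat L * cis (2 * pi * real m / real L * of_int (r - s))" for m s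
  proof -
    have "k m * of_int r + - (k m * of_int s) = 2 * pi * real m / real L * of_int (r - s)"
      using L by (simp add: k_def field_simps)
    then have "cis (k m * of_int r) * cis (- (k m * of_int s)) = cis (2 * pi * real m / real L * of_int (r - s))"
      by (simp only: cis_mult)
    then show ?thesis by (simp add: mult_ac)
  qed
  \<comment> \<open>Sampling the Fourier series at the \<open>L\<close> points \<open>k m\<close> keeps exactly the coefficients
    \<open>c s\<close> with \<open>s \<equiv> r (mod L)\<close>.\<close>
  have collapse: "(\<Sum>m\<in>{1..L}. cis (k m * of_int r) / of_nat L * (c s * cis (- (k m * of_int s))))
      = (if int L dvd (r - s) then c s else 0)" for s
  proof -
    have "(\<Sum>m\<in>{1..L}. cis (k m * of_int r) / of_nat L * (c s * cis (- (k m * of_int s))))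
        = c s / of_nat L * (\<Sum>m\<in>{1..L}. cis (2 * pi * real m / real L * of_int (r - s)))"
      by (simp only: sample sum_distrib_left)
    also have "\<dots> = (if int L dvd (r - s) then c s else 0)"
      using L by (subst sum_cis_roots_of_unity[OF L]) simp
    finally show ?thesis .
  qed
  have "((\<lambda>s. \<Sum>m\<in>{1..L}. cis (k m * of_int r) / of_nat L * (c s * cis (- (k m * of_int s))))
      has_sum (\<Sum>m\<in>{1..L}. cis (k m * of_int r) / of_nat L * Pk (k m) a b)) UNIV"
    by (intro has_sum_sum has_sum_cmult_right inversion) simp
  moreover have "(\<Sum>m\<in>{1..L}. cis (k m * of_int r) / of_nat L * Pk (k m) a b) = PL_block Pk L r 0 a b"
    by (simp add: PL_block_def k_def cis_conv_exp sum_divide_distrib mult_ac)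
  ultimately have "((\<lambda>s. if int L dvd (r - s) then c s else 0) has_sum PL_block Pk L r 0 a b) UNIV"
    by (simp only: collapse)
  then have "((\<lambda>n. c (r + n * int L)) has_sum PL_block Pk L r 0 a b) UNIV"
    using L by (subst (asm) has_sum_residue_class_iff) simp_all
  from has_sum_Diff[OF this has_sum_finite[of "{0}"]]
  show ?thesis by (simp add: c_def)
qed

lemma Pinf_block_summable:
  fixes Pk :: "real \<Rightarrow> 'n::finite \<Rightarrow> 'n \<Rightarrow> complex"
  assumes \<kappa>: "\<kappa> > 0"
    and decay: "\<And>j j'. mat_opnorm UNIV (Pinf_block Pk j j') \<le> C * exp (- \<kappa> * real_of_int \<bar>j - j'\<bar>)"
  shows "(\<lambda>s. cmod (Pinf_block Pk s 0 a b)) summable_on UNIV"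
proof (rule summable_on_comparison_test)
  show "(\<lambda>s. C * exp (- \<kappa> * \<bar>of_int s\<bar>)) summable_on UNIV"
    by (rule summable_on_cmult_right[OF summable_on_exp_neg_abs_int[OF \<kappa>]])
  show "cmod (Pinf_block Pk s 0 a b) \<le> C * exp (- \<kappa> * \<bar>of_int s\<bar>)" for s
    using order_trans[OF norm_entry_le_mat_opnorm decay[of s 0]] by simp
qed simp

lemma mat_opnorm_PL_block_minus_Pinf_block_le:
  fixes Pk :: "real \<Rightarrow> 'n::finite \<Rightarrow> 'n \<Rightarrow> complex" and L :: nat and j j' :: int
  assumes cont: "\<And>a b. continuous_on UNIV (\<lambda>k. Pk k a b)"
    and per: "\<And>k a b. Pk (k + 2 * pi) a b = Pk k a b"
    and \<kappa>: "\<kappa> > 0" and L: "L > 0" and near: "\<bar>j - j'\<bar> < int L"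
    and decay: "\<And>j j'. mat_opnorm UNIV (Pinf_block Pk j j') \<le> C * exp (- \<kappa> * real_of_int \<bar>j - j'\<bar>)"
  shows "mat_opnorm UNIV (\<lambda>a b. PL_block Pk L j j' a b - Pinf_block Pk j j' a b)
           \<le> 2 * C / (exp (\<kappa> * L) - 1) * cosh (\<kappa> * of_int (j - j'))"
proof -
  define r where "r = j - j'"
  have translate: "(\<lambda>a b. PL_block Pk L j j' a b - Pinf_block Pk j j' a b) =
      (\<lambda>a b. PL_block Pk L r 0 a b - Pinf_block Pk r 0 a b)"
    by (simp add: r_def PL_block_def Pinf_block_def)
  have "\<bar>real_of_int r\<bar> < real L"
    using near unfolding r_def by (metis of_int_abs of_int_less_iff of_int_of_nat_eq)
  then have lattice: "((\<lambda>n::int. C * exp (- \<kappa> * \<bar>of_int r + of_int n * real L\<bar>)) has_sum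
      C * (2 * cosh (\<kappa> * r) / (exp (\<kappa> * L) - 1))) (UNIV - {0})"
    using has_sum_exp_neg_abs_lattice[OF \<kappa>] L by (intro has_sum_cmult_right) simp
  have "mat_opnorm UNIV (\<lambda>a b. PL_block Pk L r 0 a b - Pinf_block Pk r 0 a b)
      \<le> 2 * C / (exp (\<kappa> * L) - 1) * cosh (\<kappa> * r)"
  proof (rule mat_opnorm_le)
    fix x :: "complex^'n"
    have aliasing: "((\<lambda>n. mat_apply (Pinf_block Pk (r + n * int L) 0) x) has_sum
        mat_apply (\<lambda>a b. PL_block Pk L r 0 a b - Pinf_block Pk r 0 a b) x) (UNIV - {0})"
      by (intro has_sum_mat_apply PL_block_aliasing cont per L Pinf_block_summable[OF \<kappa> decay])
    have bound: "norm (mat_apply (Pinf_block Pk (r + n * int L) 0) x)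
        \<le> C * exp (- \<kappa> * \<bar>of_int r + of_int n * real L\<bar>) * norm x" for n
      using order_trans[OF norm_mat_apply_le mult_right_mono[OF decay[of "r + n * int L" 0] norm_ge_zero]]
      by simp
    have "norm (mat_apply (\<lambda>a b. PL_block Pk L r 0 a b - Pinf_block Pk r 0 a b) x)
        \<le> C * (2 * cosh (\<kappa> * r) / (exp (\<kappa> * L) - 1)) * norm x"
      by (rule norm_infsum_le[OF aliasing has_sum_cmult_left[OF lattice]]) (rule bound)
    then show "norm (mat_apply (\<lambda>a b. PL_block Pk L r 0 a b - Pinf_block Pk r 0 a b) x)
        \<le> 2 * C / (exp (\<kappa> * L) - 1) * cosh (\<kappa> * r) * norm x"
      by (simp add: divide_inverse mult_ac)
  qed
  then show ?thesis unfolding translate r_def[symmetric] .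
qed

theorem lemma3:
  fixes Pk :: "real \<Rightarrow> 'n::finite \<Rightarrow> 'n \<Rightarrow> complex"
    and C \<kappa> :: real and l L :: nat
  assumes cont: "\<And>a b. continuous_on UNIV (\<lambda>k. Pk k a b)"
    and periodic: "\<And>k a b. Pk (k + 2 * pi) a b = Pk k a b"
    and herm: "\<And>k a b. Pk k b a = cnj (Pk k a b)"
    and idem: "\<And>k a b. (\<Sum>c\<in>UNIV. Pk k a c * Pk k c b) = Pk k a b"
    and C_pos: "C > 0" and kappa_pos: "\<kappa> > 0"
    and l_ge: "1 \<le> l" and l_less: "l < L"
    and decay: "\<And>j j' :: int. mat_opnorm UNIV (Pinf_block Pk j j') \<le> C * exp (- \<kappa> * real_of_int \<bar>j - j'\<bar>)"
  shows "mat_opnorm ({1..int l} \<times> UNIV)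
           (\<lambda>(j, a) (j', b). PL_block Pk L j j' a b - Pinf_block Pk j j' a b)
         \<le> 2 * C * sinh (\<kappa> * real l) / ((exp (\<kappa> * real L) - 1) * sinh \<kappa>)"
proof -
  have L: "L > 0" using l_less by simp
  define \<beta> where "\<beta> j j' = 2 * C / (exp (\<kappa> * L) - 1) * cosh (\<kappa> * of_int (j - j'))" for j j' :: int
  define R where "R = 2 * C / (exp (\<kappa> * L) - 1) * (sinh (\<kappa> * l) / sinh \<kappa>)"
  have row: "(\<Sum>j'\<in>{1..int l}. \<beta> j j') \<le> R" if "j \<in> {1..int l}" for j
    unfolding \<beta>_def R_def sum_distrib_left[symmetric] using that C_pos kappa_pos L
    by (intro mult_left_mono sum_cosh_diff_le) auto
  have \<beta>_sym: "\<beta> j j' = \<beta> j' j" for j j'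
    using cosh_minus[of "\<kappa> * of_int (j - j')"] by (simp add: \<beta>_def algebra_simps)
  have "mat_opnorm ({1..int l} \<times> UNIV)
      (\<lambda>(j, a) (j', b). PL_block Pk L j j' a b - Pinf_block Pk j j' a b) \<le> R"
  proof (rule mat_opnorm_block_le[OF _ _ row])
    show "mat_opnorm UNIV (\<lambda>a b. PL_block Pk L j j' a b - Pinf_block Pk j j' a b) \<le> \<beta> j j'"
      if "j \<in> {1..int l}" "j' \<in> {1..int l}" for j j'
      unfolding \<beta>_def using that l_less
      by (intro mat_opnorm_PL_block_minus_Pinf_block_le[OF cont periodic kappa_pos L _ decay]) auto
    show "(\<Sum>j\<in>{1..int l}. \<beta> j j') \<le> R" if "j' \<in> {1..int l}" for j'
      using row[OF that] by (simp add: \<beta>_sym)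
    show "0 \<le> R" using C_pos kappa_pos L by (simp add: R_def)
  qed simp_all
  then show ?thesis by (simp add: R_def times_divide_times_eq)
qed

end
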